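(* For $k\ge0$ let $\bar H_k\in\mathbb{R}^{p\times p}$ be (random) symmetric matrices with symmetric indefinite factorizations $\bar H_k=P_k^TL_kB_kL_k^TP_k$, and suppose $\bar H_k\to H(\theta^* )$ a.s. Let $B_k=Q_k\Lambda_kQ_k^T$ be an eigendecomposition, $\Lambda_k=\mathrm{diag}(\lambda_{k1},\dots,\lambda_{kp})$, and with a constant threshold $\underline{\tau}>0$ set $\bar\Lambda_k=\mathrm{diag}(\max\{\underline{\tau},|\lambda_{kj}|\})_{j=1}^p$ and $\bar{\bar H}_k=P_k^TL_kQ_k\bar\Lambda_kQ_k^TL_k^TP_k$. Assume the eigenvalues of $H(\theta^* )$ satisfy $0<\underline{\lambda}^*<|\lambda_j(H(\theta^* ))|<\bar\lambda^*<\infty$ for $j=1,\dots,p$. Then there exists $K_2$ such that for all $k>K_2$ the eigenvalues and the condition number of $\bar{\bar H}_k$ are bounded uniformly in $k$.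
   Context: In the factorization: $P_k$ permutation, $B_k$ block diagonal with symmetric $1\times1$ or $2\times2$ blocks, $L_k$ unit lower triangular with entries bounded in magnitude by a fixed constant independent of $k$; hence there are constants $0<\underline{\sigma}\le\bar\sigma$, independent of $k$ and the sample path, with all singular values of $L_k$ in $[\underline{\sigma},\bar\sigma]$. $H(\theta^* )$ is the Hessian of the loss at its minimizer and $\bar H_k$ the running Hessian estimate of a second-order simultaneous-perturbation stochastic approximation algorithm. *)

theory Defs
  imports "HOL-Analysis.Analysis"
begin

definition sym_mat :: "real^'n^'n \<Rightarrow> bool" where
  "sym_mat A \<longleftrightarrow> transpose A = A"

definition perm_mat :: "real^'n^'n \<Rightarrow> bool" where
  "perm_mat P \<longleftrightarrow> (\<exists>\<pi>. \<pi> permutes (UNIV::'n set) \<and>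
       P = (\<chi> i j. if j = \<pi> i then 1 else 0))"

definition unit_lower_tri :: "real^('n::{finite,linorder})^('n::{finite,linorder}) \<Rightarrow> bool" where
  "unit_lower_tri L \<longleftrightarrow> (\<forall>i. L $ i $ i = 1) \<and> (\<forall>i j. i < j \<longrightarrow> L $ i $ j = 0)"

definition block_diag_1_2 :: "real^('n::{finite,linorder})^('n::{finite,linorder}) \<Rightarrow> bool" where
  "block_diag_1_2 B \<longleftrightarrow> sym_mat B \<and>
     (\<exists>\<B> :: 'n set set.
        \<Union>\<B> = UNIV \<and>
        (\<forall>b\<in>\<B>. \<forall>c\<in>\<B>. b \<noteq> c \<longrightarrow> b \<inter> c = {}) \<and>
        (\<forall>b\<in>\<B>. (\<exists>a e. b = {a..e}) \<and> (card b = 1 \<or> card b = 2)) \<and>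
        (\<forall>i j. B $ i $ j \<noteq> 0 \<longrightarrow> (\<exists>b\<in>\<B>. i \<in> b \<and> j \<in> b)))"

definition diagm :: "real^'n \<Rightarrow> real^'n^'n" where
  "diagm v = (\<chi> i j. if i = j then v $ i else 0)"

definition is_eigenvalue :: "real^'n^'n \<Rightarrow> real \<Rightarrow> bool" where
  "is_eigenvalue A mu \<longleftrightarrow> (\<exists>v. v \<noteq> 0 \<and> A *v v = mu *\<^sub>R v)"

definition cond_num :: "real^'n^'n \<Rightarrow> real" where
  "cond_num A = onorm (\<lambda>x. A *v x) * onorm (\<lambda>x. matrix_inv A *v x)"

end

theory Submission
  imports Defs
begin

text \<open>Write \<open>T\<^sub>k = P\<^sub>k\<^sup>T L\<^sub>k\<close> and \<open>D\<^sub>k = diag (max \<tau> \<bar>\<lambda>\<^sub>k\<^sub>j\<bar>)\<close>, so that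
  \<open>Hbar\<^sub>k = T\<^sub>k B\<^sub>k T\<^sub>k\<^sup>T\<close> and \<open>Hbb\<^sub>k = T\<^sub>k Q\<^sub>k D\<^sub>k Q\<^sub>k\<^sup>T T\<^sub>k\<^sup>T\<close>. Unit lower triangular
  matrices with entries bounded by \<open>M\<close> form a compact set of invertible matrices, so the
  singular values of all \<open>L\<^sub>k\<close> and \<open>L\<^sub>k\<^sup>T\<close> lie in one interval \<open>[c, C]\<close> with \<open>c > 0\<close>,
  while \<open>P\<^sub>k\<close> and \<open>Q\<^sub>k\<close> are orthogonal. The convergent sequence \<open>Hbar\<^sub>k\<close> is bounded in
  norm by some \<open>h\<close>; testing \<open>B\<^sub>k u = \<lambda> u\<close> against \<open>y = T\<^sub>k\<^sup>-\<^sup>T u\<close> gives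
  \<open>\<bar>\<lambda>\<bar> c \<parallel>u\<parallel> \<le> \<parallel>Hbar\<^sub>k y\<parallel> \<le> h \<parallel>u\<parallel> / c\<close>, so every \<open>\<bar>\<lambda>\<^sub>k\<^sub>j\<bar> \<le> h / c\<^sup>2\<close>.
  Hence the diagonal of \<open>D\<^sub>k\<close> lies in \<open>[\<tau>, max \<tau> (h / c\<^sup>2)]\<close>, the singular values of
  \<open>Hbb\<^sub>k\<close> lie in \<open>[c\<^sup>2 \<tau>, C\<^sup>2 max \<tau> (h / c\<^sup>2)]\<close>, and these bound its eigenvalues and its
  condition number. The bounds hold for every \<open>k\<close>.\<close>

lemma norm_matrix_vector_mult_le_entry_bound:
  fixes A :: "real^'n^'m"
  assumes "\<And>i j. \<bar>A $ i $ j\<bar> \<le> K"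
  shows "norm (A *v x) \<le> real CARD('m) * real CARD('n) * K * norm x"
proof -
  have "norm (A *v x) \<le> onorm ((*v) A) * norm x" by (rule onorm) simp
  also have "\<dots> \<le> real CARD('m) * real CARD('n) * K * norm x"
    by (rule mult_right_mono[OF onorm_le_matrix_component[OF assms]]) simp
  finally show ?thesis .
qed

lemma convergent_matrices_uniformly_bounded:
  fixes X :: "nat \<Rightarrow> real^'n^'m"
  assumes "X \<longlonglongrightarrow> A"
  shows "\<exists>h. \<forall>k x. norm (X k *v x) \<le> h * norm x"
proof -
  have "Bseq X" using assms by (intro convergent_imp_Bseq convergentI)
  then obtain R where R: "\<And>k. norm (X k) \<le> R" unfolding Bseq_def by auto
  have "\<bar>X k $ i $ j\<bar> \<le> R" for k i j
    using component_le_norm_cart[of "X k $ i" j] Finite_Cartesian_Product.norm_nth_le[of "X k" i] R[of k]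
    by linarith
  hence "norm (X k *v x) \<le> real CARD('m) * real CARD('n) * R * norm x" for k x
    by (rule norm_matrix_vector_mult_le_entry_bound)
  thus ?thesis by blast
qed

lemma norm_orthogonal_matrix_vector_mult:
  assumes "orthogonal_matrix (Q :: real^'n^'n)"
  shows "norm (Q *v x) = norm x"
proof -
  have "orthogonal_transformation ((*v) Q)"
    using assms by (simp add: orthogonal_transformation_matrix matrix_of_matrix_vector_mul)
  thus ?thesis by (simp add: orthogonal_transformation)
qed

lemma perm_mat_orthogonal:
  assumes "perm_mat (P :: real^'n^'n)"
  shows "orthogonal_matrix P"
proof -
  obtain \<pi> where \<pi>: "\<pi> permutes (UNIV::'n set)" and P: "P = (\<chi> i j. if j = \<pi> i then 1 else 0)"
    using assms unfolding perm_mat_def by blast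
  have "\<pi> i = \<pi> j \<longleftrightarrow> i = j" for i j using \<pi> by (metis permutes_inj injD)
  hence "P ** transpose P = mat 1"
    unfolding P by (simp add: matrix_matrix_mult_def transpose_def mat_def vec_eq_iff
        if_distrib[of "\<lambda>x. x * _"] cong: if_cong)
  thus ?thesis using matrix_left_right_inverse orthogonal_matrix_def by blast
qed

lemma is_eigenvalue_orthogonal_diagonalization:
  assumes "orthogonal_matrix (Q :: real^'n^'n)"
  shows "is_eigenvalue (Q ** diagm d ** transpose Q) (d $ j)"
  unfolding is_eigenvalue_def
proof (intro exI conjI)
  have "transpose Q *v (Q *v axis j 1) = axis j 1"
    using assms unfolding orthogonal_matrix_def by (simp add: matrix_vector_mul_assoc)
  moreover have "diagm d *v axis j 1 = d $ j *\<^sub>R axis j 1"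
    by (simp add: vec_eq_iff matrix_vector_mult_def diagm_def axis_def if_distrib[of "\<lambda>z. z * _"] cong: if_cong)
  ultimately show "(Q ** diagm d ** transpose Q) *v (Q *v axis j 1) = d $ j *\<^sub>R (Q *v axis j 1)"
    by (simp add: matrix_vector_mult_scaleR flip: matrix_vector_mul_assoc)
  have "norm (Q *v axis j 1) = 1"
    using assms by (simp add: norm_orthogonal_matrix_vector_mult)
  thus "Q *v axis j 1 \<noteq> 0" by auto
qed

lemma invertible_if_bounded_below:
  fixes A :: "real^'n^'n"
  assumes "0 < a" "\<And>x. a * norm x \<le> norm (A *v x)"
  shows "invertible A"
proof -
  have "A *v x = 0 \<Longrightarrow> x = 0" for x
    using assms mult_le_0_iff[of a "norm x"] by (metis norm_eq_zero norm_ge_zero not_le order_antisym)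
  thus ?thesis by (metis invertible_left_inverse matrix_left_invertible_ker)
qed

lemma matrix_vector_mult_matrix_inv:
  assumes "invertible (A :: real^'n^'n)"
  shows "A *v (matrix_inv A *v x) = x"
  using assms unfolding matrix_inv_def invertible_def
  by (metis (mono_tags, lifting) matrix_vector_mul_assoc matrix_vector_mul_lid someI_ex)

definition singular_values_between :: "real \<Rightarrow> real \<Rightarrow> real^'n^'m \<Rightarrow> bool" where
  "singular_values_between a b A \<longleftrightarrow> (\<forall>x. a * norm x \<le> norm (A *v x) \<and> norm (A *v x) \<le> b * norm x)"

lemma singular_values_between_upper_nonneg:
  assumes "singular_values_between a b (A :: real^'n^'m)"
  shows "0 \<le> b"
proof -
  have "norm (A *v axis undefined 1) \<le> b"
    using assms unfolding singular_values_between_def by (metis mult.right_neutral norm_axis_1)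
  thus ?thesis by (meson norm_ge_zero order_trans)
qed

lemma singular_values_between_mult:
  assumes "singular_values_between a b A" "singular_values_between a' b' B" "0 \<le> a"
  shows "singular_values_between (a * a') (b * b') (A ** B)"
  unfolding singular_values_between_def
proof
  fix x
  have "b \<ge> 0" using assms(1) by (rule singular_values_between_upper_nonneg)
  have "a * a' * norm x \<le> a * norm (B *v x)"
    using assms(2,3) unfolding singular_values_between_def by (simp add: mult.assoc mult_left_mono)
  also have "\<dots> \<le> norm (A *v (B *v x))"
    using assms(1) unfolding singular_values_between_def by blast
  finally have lower: "a * a' * norm x \<le> norm ((A ** B) *v x)" by (simp add: matrix_vector_mul_assoc)
  have "norm (A *v (B *v x)) \<le> b * norm (B *v x)"
    using assms(1) unfolding singular_values_between_def by blast
  also have "\<dots> \<le> b * b' * norm x"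
    using assms(2) \<open>b \<ge> 0\<close> unfolding singular_values_between_def by (simp add: mult.assoc mult_left_mono)
  finally show "a * a' * norm x \<le> norm ((A ** B) *v x) \<and> norm ((A ** B) *v x) \<le> b * b' * norm x"
    using lower by (simp add: matrix_vector_mul_assoc)
qed

lemma singular_values_between_orthogonal:
  "orthogonal_matrix Q \<Longrightarrow> singular_values_between 1 1 Q"
  by (simp add: singular_values_between_def norm_orthogonal_matrix_vector_mult)

lemma singular_values_between_diagm:
  fixes d :: "real^'n"
  assumes "0 \<le> a" "\<And>j. a \<le> d $ j" "\<And>j. d $ j \<le> b"
  shows "singular_values_between a b (diagm d)"
  unfolding singular_values_between_def
proof
  fix y :: "real^'n"
  have diag_mult: "diagm d *v y = (\<chi> j. d $ j * y $ j)"
    by (simp add: vec_eq_iff matrix_vector_mult_def diagm_def if_distrib[of "\<lambda>z. z * _"] cong: if_cong)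
  have "\<bar>a * y $ j\<bar> \<le> \<bar>d $ j * y $ j\<bar>" "\<bar>d $ j * y $ j\<bar> \<le> \<bar>b * y $ j\<bar>" for j
    using assms(1) assms(2,3)[of j] by (auto simp: abs_mult intro: mult_right_mono)
  hence "(a * y $ j)\<^sup>2 \<le> (d $ j * y $ j)\<^sup>2" "(d $ j * y $ j)\<^sup>2 \<le> (b * y $ j)\<^sup>2" for j
    by (simp_all only: abs_le_square_iff)
  hence "norm (a *\<^sub>R y) \<le> norm (diagm d *v y)" "norm (diagm d *v y) \<le> norm (b *\<^sub>R y)"
    unfolding norm_le diag_mult by (simp_all add: inner_vec_def sum_mono power2_eq_square)
  moreover have "0 \<le> b" using assms(1) assms(2,3)[of undefined] by linarith
  ultimately show "a * norm y \<le> norm (diagm d *v y) \<and> norm (diagm d *v y) \<le> b * norm y"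
    using assms(1) by simp
qed

lemma singular_values_between_eigenvalue_bounds:
  assumes "singular_values_between a b H" "is_eigenvalue H \<mu>"
  shows "a \<le> \<bar>\<mu>\<bar> \<and> \<bar>\<mu>\<bar> \<le> b"
proof -
  obtain v where "v \<noteq> 0" and "H *v v = \<mu> *\<^sub>R v"
    using assms(2) unfolding is_eigenvalue_def by blast
  hence "a * norm v \<le> \<bar>\<mu>\<bar> * norm v" "\<bar>\<mu>\<bar> * norm v \<le> b * norm v" "norm v > 0"
    using assms(1) unfolding singular_values_between_def by (metis norm_scaleR, metis norm_scaleR, simp)
  thus ?thesis by (meson mult_right_le_imp_le)
qed

lemma singular_values_between_cond_num_le:
  fixes H :: "real^'n^'n"
  assumes "0 < a" "singular_values_between a b H"
  shows "cond_num H \<le> b / a"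
proof -
  have lower: "a * norm x \<le> norm (H *v x)" and upper: "norm (H *v x) \<le> b * norm x" for x
    using assms(2) unfolding singular_values_between_def by auto
  have "invertible H" using assms(1) lower by (rule invertible_if_bounded_below)
  have "onorm ((*v) H) \<le> b" using upper by (rule onorm_le)
  moreover have "onorm ((*v) (matrix_inv H)) \<le> 1 / a"
  proof (rule onorm_le)
    fix x
    show "norm (matrix_inv H *v x) \<le> 1 / a * norm x"
      using lower[of "matrix_inv H *v x"] assms(1)
      by (simp add: matrix_vector_mult_matrix_inv[OF \<open>invertible H\<close>] field_simps)
  qed
  moreover have "0 \<le> b" using assms(2) by (rule singular_values_between_upper_nonneg)
  ultimately have "cond_num H \<le> b * (1 / a)"
    unfolding cond_num_def by (intro mult_mono) (auto intro: onorm_pos_le)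
  thus ?thesis by simp
qed

lemma unit_lower_tri_invertible:
  fixes L :: "real^('n::{finite,linorder})^('n::{finite,linorder})"
  assumes "unit_lower_tri L"
  shows "invertible L"
proof -
  have "x = 0" if "L *v x = 0" for x
  proof (rule ccontr)
    assume "x \<noteq> 0"
    define I where "I = {i. x $ i \<noteq> 0}"
    define i where "i = Min I"
    have "I \<noteq> {}" using \<open>x \<noteq> 0\<close> unfolding I_def by (simp add: vec_eq_iff)
    hence xi: "x $ i \<noteq> 0" using Min_in[of I] unfolding i_def I_def by simp
    have "x $ j = 0" if "j < i" for j
      using that Min_le[of I j] unfolding i_def I_def by fastforce
    hence "L $ i $ j * x $ j = 0" if "j \<noteq> i" for j
      using that assms unfolding unit_lower_tri_def by (cases "j < i") auto
    hence "(L *v x) $ i = L $ i $ i * x $ i"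
      unfolding matrix_vector_mult_def by (simp add: sum.remove[of UNIV i] sum.neutral)
    thus False using assms xi \<open>L *v x = 0\<close> unfolding unit_lower_tri_def by simp
  qed
  thus ?thesis by (metis invertible_left_inverse matrix_left_invertible_ker)
qed

lemma compact_unit_lower_tri_entry_bounded:
  "compact {L :: real^('n::{finite,linorder})^('n::{finite,linorder}). unit_lower_tri L \<and> (\<forall>i j. \<bar>L $ i $ j\<bar> \<le> M)}"
  (is "compact ?S")
proof (rule compact_eq_bounded_closed[THEN iffD2], rule conjI)
  have "norm L \<le> real CARD('n) * real CARD('n) * M" if "L \<in> ?S" for L
  proof -
    have "norm L \<le> (\<Sum>i\<in>UNIV. norm (L $ i))" by (simp add: norm_vec_def L2_set_le_sum)
    also have "\<dots> \<le> (\<Sum>i\<in>(UNIV::'n set). \<Sum>j\<in>(UNIV::'n set). M)"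
      using that by (intro sum_mono order_trans[OF norm_le_l1_cart]) auto
    finally show ?thesis by simp
  qed
  thus "bounded ?S" unfolding bounded_iff by blast
  show "closed ?S"
    unfolding unit_lower_tri_def
    by (intro closed_Collect_conj closed_Collect_all closed_Collect_imp closed_Collect_eq
        closed_Collect_le continuous_intros) auto
qed

lemma compact_injective_uniformly_bounded_below:
  fixes S :: "(real^'n^'m) set"
  assumes "compact S" "\<And>A x. A \<in> S \<Longrightarrow> A *v x = 0 \<Longrightarrow> x = 0"
  shows "\<exists>c>0. \<forall>A\<in>S. \<forall>x. c * norm x \<le> norm (A *v x)"
proof (cases "S = {}")
  case True thus ?thesis by (auto intro: exI[of _ 1])
next
  case False
  let ?K = "S \<times> sphere (0::real^'n) 1"
  have "compact ?K" using assms(1) by (simp add: compact_Times)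
  moreover have "?K \<noteq> {}" using False vector_choose_size[of 1, where ?'a="real^'n"] by auto
  moreover have "continuous_on ?K (\<lambda>z. norm (fst z *v snd z))"
    unfolding matrix_vector_mult_def by (intro continuous_intros)
  ultimately obtain z0 where z0: "z0 \<in> ?K"
    and min: "\<And>z. z \<in> ?K \<Longrightarrow> norm (fst z0 *v snd z0) \<le> norm (fst z *v snd z)"
    by (rule continuous_attains_inf[elim_format]) blast
  define c where "c = norm (fst z0 *v snd z0)"
  have "c > 0" using z0 assms(2)[of "fst z0" "snd z0"] unfolding c_def by (auto simp: mem_Times_iff)
  moreover have "c * norm x \<le> norm (A *v x)" if "A \<in> S" for A x
  proof (cases "x = 0")
    case False
    let ?u = "(1 / norm x) *\<^sub>R x"
    have "(A, ?u) \<in> ?K" using that False by (simp add: mem_Times_iff)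
    hence "c \<le> norm (A *v ?u)" using min unfolding c_def by fastforce
    thus ?thesis using False by (simp add: matrix_vector_mult_scaleR field_simps)
  qed simp
  ultimately show ?thesis by blast
qed

lemma unit_lower_tri_uniform_singular_value_bounds:
  fixes L :: "'a \<Rightarrow> real^('n::{finite,linorder})^('n::{finite,linorder})"
  assumes "\<And>k. unit_lower_tri (L k)" "\<And>k i j. \<bar>L k $ i $ j\<bar> \<le> M"
  obtains c C where "0 < c" "\<And>k. singular_values_between c C (L k)"
    "\<And>k. singular_values_between c C (transpose (L k))"
proof -
  define S where "S = {L :: real^('n::{finite,linorder})^('n::{finite,linorder}).
    unit_lower_tri L \<and> (\<forall>i j. \<bar>L $ i $ j\<bar> \<le> M)}"
  have "compact (S \<union> transpose ` S)"
    unfolding S_def using compact_unit_lower_tri_entry_bounded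
    by (intro compact_Un compact_continuous_image) (auto simp: transpose_def intro!: continuous_intros)
  moreover have "invertible A" if "A \<in> S \<union> transpose ` S" for A
    using that unfolding S_def by (auto intro: unit_lower_tri_invertible transpose_invertible)
  hence "x = 0" if "A \<in> S \<union> transpose ` S" "A *v x = 0" for A x
    using that by (metis invertible_left_inverse matrix_left_invertible_ker)
  ultimately obtain c where "c > 0" and lower: "\<forall>A\<in>S \<union> transpose ` S. \<forall>x. c * norm x \<le> norm (A *v x)"
    using compact_injective_uniformly_bounded_below by blast
  have "L k \<in> S" for k using assms unfolding S_def by blast
  moreover have "norm (L k *v x) \<le> real CARD('n) * real CARD('n) * M * norm x"
    "norm (transpose (L k) *v x) \<le> real CARD('n) * real CARD('n) * M * norm x" for k x
    using assms(2) by (auto intro!: norm_matrix_vector_mult_le_entry_bound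
        simp: transpose_def simp del: transpose_matrix_vector)
  ultimately show ?thesis
    using that[of c "real CARD('n) * real CARD('n) * M"] \<open>c > 0\<close> lower
    unfolding singular_values_between_def by blast
qed

lemma congruence_eigenvalue_bound:
  fixes T B H :: "real^'n^'n"
  assumes "H = T ** B ** transpose T" "0 < c"
    and "\<And>x. c * norm x \<le> norm (T *v x)" "\<And>x. c * norm x \<le> norm (transpose T *v x)"
    and "\<And>x. norm (H *v x) \<le> h * norm x" "is_eigenvalue B \<mu>"
  shows "\<bar>\<mu>\<bar> \<le> h / c\<^sup>2"
proof -
  obtain u where "u \<noteq> 0" and u: "B *v u = \<mu> *\<^sub>R u"
    using assms(6) unfolding is_eigenvalue_def by blast
  have "invertible (transpose T)" using assms(2,4) by (rule invertible_if_bounded_below)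
  define y where "y = matrix_inv (transpose T) *v u"
  have Ty: "transpose T *v y = u"
    unfolding y_def using \<open>invertible (transpose T)\<close> by (rule matrix_vector_mult_matrix_inv)
  have "\<bar>\<mu>\<bar> * (c * norm u) \<le> \<bar>\<mu>\<bar> * norm (T *v u)" using assms(3) by (simp add: mult_left_mono)
  also have "\<dots> = norm (H *v y)"
    by (simp add: assms(1) Ty u matrix_vector_mult_scaleR del: transpose_matrix_vector
        flip: matrix_vector_mul_assoc)
  also have "\<dots> \<le> h * norm y" by (rule assms(5))
  also have "\<dots> \<le> h * (norm u / c)"
  proof -
    have "norm y \<le> norm u / c"
      using assms(2) assms(4)[of y] by (simp add: Ty field_simps del: transpose_matrix_vector)
    moreover have "0 \<le> h * norm u" using assms(5)[of u] norm_ge_zero order_trans by blast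
    hence "0 \<le> h" using \<open>u \<noteq> 0\<close> by (simp add: zero_le_mult_iff)
    ultimately show ?thesis by (rule mult_left_mono)
  qed
  finally have "\<bar>\<mu>\<bar> * c * c * norm u \<le> h * norm u"
    using assms(2) by (simp add: field_simps)
  thus ?thesis using assms(2) \<open>u \<noteq> 0\<close> by (simp add: field_simps power2_eq_square)
qed

lemma factorization_eigenvalue_bound:
  fixes P L B H :: "real^'n^'n"
  assumes "H = transpose P ** L ** B ** transpose L ** P" "perm_mat P" "0 < c"
    and "singular_values_between c C L" "singular_values_between c C (transpose L)"
    and "\<And>x. norm (H *v x) \<le> h * norm x" "is_eigenvalue B \<mu>"
  shows "\<bar>\<mu>\<bar> \<le> h / c\<^sup>2"
proof (rule congruence_eigenvalue_bound)
  let ?T = "transpose P ** L"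
  show "H = ?T ** B ** transpose ?T"
    by (simp add: assms(1) matrix_transpose_mul matrix_mul_assoc)
  have P_sv: "singular_values_between 1 1 P" "singular_values_between 1 1 (transpose P)"
    using assms(2) perm_mat_orthogonal orthogonal_matrix_transpose singular_values_between_orthogonal
    by blast+
  have "singular_values_between (1 * c) (1 * C) ?T"
    using P_sv(2) assms(4) by (rule singular_values_between_mult) simp
  moreover have "singular_values_between (c * 1) (C * 1) (transpose ?T)"
    unfolding matrix_transpose_mul transpose_transpose
    using assms(5) P_sv(1) by (rule singular_values_between_mult) (use assms(3) in simp)
  ultimately show "c * norm x \<le> norm (?T *v x)" "c * norm x \<le> norm (transpose ?T *v x)" for x
    unfolding singular_values_between_def by simp_all
qed (use assms(3,6,7) in auto)

theorem theoremA4: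
  fixes Hbar :: "nat \<Rightarrow> real^('p::{finite,linorder})^('p::{finite,linorder})"
    and P L B Q :: "nat \<Rightarrow> real^('p::{finite,linorder})^('p::{finite,linorder})"
    and lam :: "nat \<Rightarrow> real^('p::{finite,linorder})"
    and Hstar :: "real^('p::{finite,linorder})^('p::{finite,linorder})"
    and M tau lo hi :: real
  assumes Hbar_sym: "\<And>k. sym_mat (Hbar k)"
    and P_perm: "\<And>k. perm_mat (P k)"
    and L_tri: "\<And>k. unit_lower_tri (L k)"
    and L_bdd: "\<And>k i j. \<bar>L k $ i $ j\<bar> \<le> M"
    and B_blk: "\<And>k. block_diag_1_2 (B k)"
    and fact: "\<And>k. Hbar k = transpose (P k) ** L k ** B k ** transpose (L k) ** P k"
    and Q_orth: "\<And>k. orthogonal_matrix (Q k)"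
    and eig: "\<And>k. B k = Q k ** diagm (lam k) ** transpose (Q k)"
    and conv: "Hbar \<longlonglongrightarrow> Hstar"
    and Hstar_sym: "sym_mat Hstar"
    and tau_pos: "tau > 0"
    and lo_pos: "0 < lo"
    and Hstar_eig: "\<And>mu. is_eigenvalue Hstar mu \<Longrightarrow> lo < \<bar>mu\<bar> \<and> \<bar>mu\<bar> < hi"
  shows "\<exists>K2 c C. 0 < c \<and> (\<forall>k>K2.
           let Hbb = transpose (P k) ** L k ** Q k ** diagm (\<chi> j. max tau \<bar>lam k $ j\<bar>)
                       ** transpose (Q k) ** transpose (L k) ** P k
           in (\<forall>mu. is_eigenvalue Hbb mu \<longrightarrow> c \<le> \<bar>mu\<bar> \<and> \<bar>mu\<bar> \<le> C) \<and> cond_num Hbb \<le> C)"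
proof -
  obtain c CL where "0 < c" and L_sv: "\<And>k. singular_values_between c CL (L k)"
    "\<And>k. singular_values_between c CL (transpose (L k))"
    using unit_lower_tri_uniform_singular_value_bounds[of L M] L_tri L_bdd by blast
  obtain h where h: "\<And>k x. norm (Hbar k *v x) \<le> h * norm x"
    using convergent_matrices_uniformly_bounded[OF conv] by blast
  have "\<bar>lam k $ j\<bar> \<le> h / c\<^sup>2" for k j
    using fact[of k] P_perm[of k] \<open>0 < c\<close> L_sv[of k] h[of k]
    by (rule factorization_eigenvalue_bound)
      (simp add: eig is_eigenvalue_orthogonal_diagonalization Q_orth)
  hence D_sv: "singular_values_between tau (max tau (h / c\<^sup>2))
      (diagm (\<chi> j. max tau \<bar>lam k $ j\<bar>))" for k
    using tau_pos by (intro singular_values_between_diagm) (auto intro: max.coboundedI2)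
  have P_sv: "singular_values_between 1 1 (P k)" "singular_values_between 1 1 (transpose (P k))"
    and Q_sv: "singular_values_between 1 1 (Q k)" "singular_values_between 1 1 (transpose (Q k))" for k
    using P_perm perm_mat_orthogonal Q_orth orthogonal_matrix_transpose singular_values_between_orthogonal
    by blast+
  define Hbb where "Hbb k = transpose (P k) ** L k ** Q k ** diagm (\<chi> j. max tau \<bar>lam k $ j\<bar>)
                       ** transpose (Q k) ** transpose (L k) ** P k" for k
  define lower upper where "lower = c * tau * c" and "upper = CL * max tau (h / c\<^sup>2) * CL"
  have "singular_values_between (1 * c * 1 * tau * 1 * c * 1)
      (1 * CL * 1 * max tau (h / c\<^sup>2) * 1 * CL * 1) (Hbb k)" for k
    unfolding Hbb_def by (intro singular_values_between_mult P_sv L_sv Q_sv D_sv)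
      (use \<open>0 < c\<close> tau_pos in simp_all)
  hence Hbb_sv: "singular_values_between lower upper (Hbb k)" for k
    by (simp add: lower_def upper_def)
  have "0 < lower" using \<open>0 < c\<close> tau_pos by (simp add: lower_def)
  moreover have "lower \<le> \<bar>\<mu>\<bar> \<and> \<bar>\<mu>\<bar> \<le> max upper (upper / lower)" if "is_eigenvalue (Hbb k) \<mu>" for k \<mu>
    using singular_values_between_eigenvalue_bounds[OF Hbb_sv that] by linarith
  moreover have "cond_num (Hbb k) \<le> max upper (upper / lower)" for k
    using singular_values_between_cond_num_le[OF \<open>0 < lower\<close> Hbb_sv[of k]] by linarith
  ultimately show ?thesis unfolding Hbb_def Let_def by blast
qed

end
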